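(* Let $\Lambda=(\lambda_1,\lambda_2)\in(0,\infty)^2$, $\phi\in[0,1)$ and $0\le\theta<\theta'\le 1$. Let $(X_1,X_2)\sim\mathcal{BZIP}^+(\Lambda,\theta,\phi)$ and $(X_1',X_2')\sim\mathcal{BZIP}^+(\Lambda,\theta',\phi)$, with joint distribution functions $H^+_{\Lambda,\phi,\theta}$ and $H^+_{\Lambda,\phi,\theta'}$. Then $(X_1,X_2)\prec_{PQD}(X_1',X_2')$, i.e. $H^+_{\Lambda,\phi,\theta}(x_1,x_2)\le H^+_{\Lambda,\phi,\theta'}(x_1,x_2)$ for all $(x_1,x_2)\in\mathbb{R}^2$ (the two pairs having identical marginal distributions).
   Context: For $\mu>0$, $G_\mu$ denotes the distribution function of the Poisson distribution with mean $\mu$, and $G_\mu^{-1}(u)=\inf\{x\in\mathbb{N}:G_\mu(x)\ge u\}$ its quantile function (for $\mu=0$, $G_0^{-1}\equiv 0$). The model $\mathcal{BZIP}^{\pm}(\Lambda,\theta,\phi)$, with $\Lambda=(\lambda_1,\lambda_2)\in(0,\infty)^2$, $\theta\in[0,1]$, $\phi\in[0,1)$, is the law of $(X_1,X_2)=W\,(T_1,T_2)$, where: $W\sim$ Bernoulli$(1-\phi)$ (so $P(W=0)=\phi$); $T_j=Y_j+Z_j$ for $j=1,2$; $Y_1\sim\mathcal{P}((1-\theta)\lambda_1)$, $Y_2\sim\mathcal{P}((1-\theta)\lambda_2)$; $U\sim\mathcal U(0,1)$; in the positive-dependence model $\mathcal{BZIP}^+$, $(Z_1,Z_2)=(G^{-1}_{\theta\lambda_1}(U),G^{-1}_{\theta\lambda_2}(U))$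 (comonotonic shock), and in the negative-dependence model $\mathcal{BZIP}^-$, $(Z_1,Z_2)=(G^{-1}_{\theta\lambda_1}(U),G^{-1}_{\theta\lambda_2}(1-U))$ (counter-monotonic shock); $W$, $Y_1$, $Y_2$, $U$ are mutually independent. The law of $(T_1,T_2)$ is denoted $\mathcal{BP}^{\pm}(\Lambda,\theta)$. For random pairs with the same marginals, $(X_1,X_2)\prec_{PQD}(X_1',X_2')$ means $P(X_1\le x_1,X_2\le x_2)\le P(X_1'\le x_1,X_2'\le x_2)$ for all $x_1,x_2$. *)

theory Defs
  imports "HOL-Probability.Probability"
begin

definition pois :: "real \<Rightarrow> nat pmf" where
  "pois mu = (if mu = 0 then return_pmf 0 else poisson_pmf mu)"

definition Gpois :: "real \<Rightarrow> nat \<Rightarrow> real" where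
  "Gpois mu x = measure_pmf.prob (pois mu) {..x}"

definition Gpois_inv :: "real \<Rightarrow> real \<Rightarrow> nat" where
  "Gpois_inv mu u = (if mu = 0 then 0 else (LEAST x. Gpois mu x \<ge> u))"

text \<open>Underlying probability space for W, Y1, Y2 (discrete, independent) and U ~ U(0,1),
  all mutually independent (product measure).\<close>
definition bzip_space :: "real \<times> real \<Rightarrow> real \<Rightarrow> real \<Rightarrow> ((bool \<times> nat \<times> nat) \<times> real) measure" where
  "bzip_space L theta phi =
     measure_pmf (pair_pmf (bernoulli_pmf (1 - phi))
                  (pair_pmf (pois ((1 - theta) * fst L)) (pois ((1 - theta) * snd L))))
     \<Otimes>\<^sub>M uniform_measure lborel {0<..<1::real}"

definition bzip_plus_X :: "real \<times> real \<Rightarrow> real \<Rightarrow> (bool \<times> nat \<times> nat) \<times> real \<Rightarrow> nat \<times> nat" where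
  "bzip_plus_X L theta \<omega> =
     (case \<omega> of ((w, y1, y2), u) \<Rightarrow>
        (if w then (y1 + Gpois_inv (theta * fst L) u, y2 + Gpois_inv (theta * snd L) u)
         else (0, 0)))"

definition H_plus :: "real \<times> real \<Rightarrow> real \<Rightarrow> real \<Rightarrow> real \<Rightarrow> real \<Rightarrow> real" where
  "H_plus L phi theta x1 x2 =
     measure (bzip_space L theta phi)
       {\<omega> \<in> space (bzip_space L theta phi).
          real (fst (bzip_plus_X L theta \<omega>)) \<le> x1 \<and> real (snd (bzip_plus_X L theta \<omega>)) \<le> x2}"

definition F1_plus :: "real \<times> real \<Rightarrow> real \<Rightarrow> real \<Rightarrow> real \<Rightarrow> real" where
  "F1_plus L phi theta x =
     measure (bzip_space L theta phi)
       {\<omega> \<in> space (bzip_space L theta phi). real (fst (bzip_plus_X L theta \<omega>)) \<le> x}"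

definition F2_plus :: "real \<times> real \<Rightarrow> real \<Rightarrow> real \<Rightarrow> real \<Rightarrow> real" where
  "F2_plus L phi theta x =
     measure (bzip_space L theta phi)
       {\<omega> \<in> space (bzip_space L theta phi). real (snd (bzip_plus_X L theta \<omega>)) \<le> x}"

definition bzip_plus_PQD :: "real \<times> real \<Rightarrow> real \<Rightarrow> real \<Rightarrow> real \<Rightarrow> bool" where
  "bzip_plus_PQD L phi theta theta' \<longleftrightarrow>
     (\<forall>x. F1_plus L phi theta x = F1_plus L phi theta' x) \<and>
     (\<forall>x. F2_plus L phi theta x = F2_plus L phi theta' x) \<and>
     (\<forall>x1 x2. H_plus L phi theta x1 x2 \<le> H_plus L phi theta' x1 x2)"

end

theory Submission
  imports Defs
begin

(* Split the independent part Y_j ~ P((1 - theta) lambda_j) of the theta-model as the sum of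
   independent P((1 - theta') lambda_j) and P((theta' - theta) lambda_j) variables.  Conditionally
   on the first summands, the theta-model pair is (V_1 + Z_1, V_2 + Z_2) with V_j independent of
   the comonotone shock Z, and its distribution function is bounded by the Frechet upper bound
   min (G_{theta' lambda_1}, G_{theta' lambda_2}) of its marginals, which is exactly the
   distribution function of the comonotone shock of the theta'-model.  Averaging over the common
   summands gives H_theta <= H_theta'.  The marginals are P(lambda_j) for every theta, and the
   zero-inflation adds the same mass phi at (0, 0) to both models. *)

definition pmf_conv :: "nat pmf \<Rightarrow> (nat \<Rightarrow> real) \<Rightarrow> nat \<Rightarrow> real" where
  "pmf_conv p g a = (\<Sum>y\<le>a. pmf p y * g (a - y))"

lemma pmf_conv_mono:
  assumes "\<And>n. g n \<le> h n"
  shows "pmf_conv p g a \<le> pmf_conv p h a"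
  unfolding pmf_conv_def by (intro sum_mono mult_left_mono assms) simp

lemma pmf_conv_const_le:
  assumes "0 \<le> c"
  shows "pmf_conv p (\<lambda>_. c) a \<le> c"
proof -
  have "pmf_conv p (\<lambda>_. c) a = measure_pmf.prob p {..a} * c"
    by (simp add: pmf_conv_def measure_measure_pmf_finite sum_distrib_right)
  also have "\<dots> \<le> c"
    using assms by (simp add: mult_left_le_one_le)
  finally show ?thesis .
qed

lemma pmf_conv_swap:
  "pmf_conv p (\<lambda>A. pmf_conv q (\<lambda>B. f A B) b) a = pmf_conv q (\<lambda>B. pmf_conv p (\<lambda>A. f A B) a) b"
  unfolding pmf_conv_def sum_distrib_left by (subst sum.swap) (simp add: mult.left_commute)

lemma Gpois_nonneg: "0 \<le> Gpois mu n"
  by (simp add: Gpois_def)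

lemma Gpois_le_1: "Gpois mu n \<le> 1"
  by (simp add: Gpois_def)

lemma Gpois_mono: "m \<le> n \<Longrightarrow> Gpois mu m \<le> Gpois mu n"
  unfolding Gpois_def by (intro measure_pmf.finite_measure_mono) auto

lemma Gpois_eq_pmf_conv: "Gpois mu a = pmf_conv (pois mu) (\<lambda>_. 1) a"
  by (simp add: Gpois_def pmf_conv_def measure_measure_pmf_finite)

lemma pmf_pois: "0 \<le> mu \<Longrightarrow> pmf (pois mu) k = exp (- mu) * mu ^ k / fact k"
  by (cases k) (auto simp: pois_def)

lemma pmf_conv_pois_pmf:
  assumes "0 \<le> m" "0 \<le> d"
  shows "pmf_conv (pois m) (pmf (pois d)) k = pmf (pois (m + d)) k"
proof -
  have "pmf_conv (pois m) (pmf (pois d)) k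
      = (\<Sum>y\<le>k. exp (- (m + d)) / fact k * (of_nat (k choose y) * m ^ y * d ^ (k - y)))"
    unfolding pmf_conv_def
  proof (rule sum.cong[OF refl])
    fix y assume "y \<in> {..k}"
    then have "real (k choose y) = fact k / (fact y * fact (k - y))"
      by (simp add: binomial_fact)
    then show "pmf (pois m) y * pmf (pois d) (k - y)
        = exp (- (m + d)) / fact k * (of_nat (k choose y) * m ^ y * d ^ (k - y))"
      using assms by (simp add: pmf_pois exp_add[symmetric] field_simps)
  qed
  also have "\<dots> = exp (- (m + d)) / fact k * (m + d) ^ k"
    by (simp add: binomial_ring sum_distrib_left)
  finally show ?thesis
    using assms by (simp add: pmf_pois)
qed

lemma pmf_conv_pois_add:
  assumes "0 \<le> m" "0 \<le> d"
  shows "pmf_conv (pois (m + d)) g a = pmf_conv (pois m) (pmf_conv (pois d) g) a"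
proof -
  have "pmf_conv (pois (m + d)) g a
      = (\<Sum>k\<le>a. \<Sum>i\<le>k. pmf (pois m) i * pmf (pois d) (k - i) * g (a - i - (k - i)))"
    unfolding pmf_conv_def
    by (intro sum.cong refl)
      (auto simp: pmf_conv_pois_pmf[OF assms, unfolded pmf_conv_def, symmetric] sum_distrib_right)
  also have "\<dots> = (\<Sum>(i, j) \<in> {(i, j). i + j \<le> a}. pmf (pois m) i * pmf (pois d) j * g (a - i - j))"
    by (rule sum.triangle_reindex_eq[symmetric])
  also have "{(i, j). i + j \<le> a} = Sigma {..a} (\<lambda>i. {..a - i})"
    by auto
  also have "(\<Sum>(i, j) \<in> Sigma {..a} (\<lambda>i. {..a - i}). pmf (pois m) i * pmf (pois d) j * g (a - i - j))
      = pmf_conv (pois m) (pmf_conv (pois d) g) a"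
    by (simp add: sum.Sigma[symmetric] pmf_conv_def sum_distrib_left mult.assoc)
  finally show ?thesis .
qed

lemma pmf_conv_pois_Gpois:
  assumes "0 \<le> m" "0 \<le> d"
  shows "pmf_conv (pois m) (Gpois d) a = Gpois (m + d) a"
proof -
  have "Gpois d = pmf_conv (pois d) (\<lambda>_. 1)"
    by (simp add: Gpois_eq_pmf_conv fun_eq_iff)
  then show ?thesis
    by (simp add: Gpois_eq_pmf_conv pmf_conv_pois_add[OF assms])
qed

lemma pmf_conv_pois_Gpois_split:
  assumes "0 \<le> theta" "theta \<le> 1" "0 \<le> l"
  shows "pmf_conv (pois ((1 - theta) * l)) (Gpois (theta * l)) a = Gpois l a"
proof -
  have "0 \<le> (1 - theta) * l" "0 \<le> theta * l"
    using assms by simp_all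
  moreover have "(1 - theta) * l + theta * l = l"
    by (simp add: algebra_simps)
  ultimately show ?thesis
    using pmf_conv_pois_Gpois by metis
qed

(* Joint distribution function of (Y_1 + Z_1, Y_2 + Z_2) with Y_j ~ P(m_j) independent and a
   comonotone shock Z with Z_j ~ P(s_j), for which P(Z_1 <= A, Z_2 <= B) = min (G_s1 A) (G_s2 B). *)
definition bp_plus_cdf :: "real \<Rightarrow> real \<Rightarrow> real \<Rightarrow> real \<Rightarrow> nat \<Rightarrow> nat \<Rightarrow> real" where
  "bp_plus_cdf m1 m2 s1 s2 a b =
     pmf_conv (pois m1) (\<lambda>A. pmf_conv (pois m2) (\<lambda>B. min (Gpois s1 A) (Gpois s2 B)) b) a"

lemma bp_plus_cdf_le_marginals:
  assumes "0 \<le> d1" "0 \<le> d2" "0 \<le> s1" "0 \<le> s2"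
  shows "bp_plus_cdf d1 d2 s1 s2 a b \<le> min (Gpois (d1 + s1) a) (Gpois (d2 + s2) b)"
proof -
  have "bp_plus_cdf d1 d2 s1 s2 a b \<le> pmf_conv (pois d1) (\<lambda>A. pmf_conv (pois d2) (\<lambda>_. Gpois s1 A) b) a"
    unfolding bp_plus_cdf_def by (intro pmf_conv_mono) simp
  also have "\<dots> \<le> pmf_conv (pois d1) (Gpois s1) a"
    by (intro pmf_conv_mono pmf_conv_const_le Gpois_nonneg)
  also have "\<dots> = Gpois (d1 + s1) a"
    using assms by (simp add: pmf_conv_pois_Gpois)
  finally have first: "bp_plus_cdf d1 d2 s1 s2 a b \<le> Gpois (d1 + s1) a" .
  have "bp_plus_cdf d1 d2 s1 s2 a b \<le> pmf_conv (pois d1) (\<lambda>_. pmf_conv (pois d2) (Gpois s2) b) a"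
    unfolding bp_plus_cdf_def by (intro pmf_conv_mono) simp
  also have "\<dots> = pmf_conv (pois d1) (\<lambda>_. Gpois (d2 + s2) b) a"
    using assms by (simp add: pmf_conv_pois_Gpois)
  also have "\<dots> \<le> Gpois (d2 + s2) b"
    by (intro pmf_conv_const_le Gpois_nonneg)
  finally show ?thesis
    using first by simp
qed

lemma bp_plus_cdf_shift_mono:
  assumes "0 \<le> m1" "0 \<le> m2" "0 \<le> d1" "0 \<le> d2" "0 \<le> s1" "0 \<le> s2"
  shows "bp_plus_cdf (m1 + d1) (m2 + d2) s1 s2 a b \<le> bp_plus_cdf m1 m2 (d1 + s1) (d2 + s2) a b"
proof -
  have swap: "pmf_conv (pois d1) (\<lambda>A. pmf_conv (pois m2) (g A) b)
      = (\<lambda>A. pmf_conv (pois m2) (\<lambda>B. pmf_conv (pois d1) (\<lambda>A'. g A' B) A) b)" for g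
    by (rule ext) (rule pmf_conv_swap)
  have "bp_plus_cdf (m1 + d1) (m2 + d2) s1 s2 a b
      = pmf_conv (pois m1) (\<lambda>A. pmf_conv (pois m2) (\<lambda>B. bp_plus_cdf d1 d2 s1 s2 A B) b) a"
    using assms by (simp add: bp_plus_cdf_def pmf_conv_pois_add swap)
  also have "\<dots> \<le> pmf_conv (pois m1)
      (\<lambda>A. pmf_conv (pois m2) (\<lambda>B. min (Gpois (d1 + s1) A) (Gpois (d2 + s2) B)) b) a"
    using assms by (intro pmf_conv_mono bp_plus_cdf_le_marginals)
  finally show ?thesis
    by (simp add: bp_plus_cdf_def)
qed

lemma bp_plus_cdf_mono_theta:
  assumes "0 \<le> l1" "0 \<le> l2" "0 \<le> theta" "theta \<le> theta'" "theta' \<le> 1"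
  shows "bp_plus_cdf ((1 - theta) * l1) ((1 - theta) * l2) (theta * l1) (theta * l2) a b
    \<le> bp_plus_cdf ((1 - theta') * l1) ((1 - theta') * l2) (theta' * l1) (theta' * l2) a b"
proof -
  have "(1 - theta) * l = (1 - theta') * l + (theta' - theta) * l"
    and "theta' * l = (theta' - theta) * l + theta * l" for l
    by (simp_all add: algebra_simps)
  then show ?thesis
    using assms by (simp only:) (intro bp_plus_cdf_shift_mono; simp)
qed

lemma Gpois_tendsto_1: "Gpois mu \<longlonglongrightarrow> 1"
proof -
  have "(\<lambda>n. measure_pmf.prob (pois mu) {..n}) \<longlonglongrightarrow> measure_pmf.prob (pois mu) (\<Union>n. {..n})"
    by (intro measure_pmf.finite_Lim_measure_incseq) (auto simp: incseq_def)
  then show ?thesis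
    by (simp add: Gpois_def[abs_def] UN_atMost_UNIV)
qed

lemma Gpois_inv_le_iff:
  assumes "u < 1"
  shows "Gpois_inv mu u \<le> n \<longleftrightarrow> u \<le> Gpois mu n"
proof (cases "mu = 0")
  case True
  then show ?thesis
    using assms by (simp add: Gpois_inv_def Gpois_def pois_def)
next
  case False
  obtain k where k: "u \<le> Gpois mu k"
    using eventually_sequentially order_tendstoD(1)[OF Gpois_tendsto_1 assms]
    by (metis less_imp_le order_refl)
  show ?thesis
  proof
    assume "Gpois_inv mu u \<le> n"
    moreover have "u \<le> Gpois mu (Gpois_inv mu u)"
      using False LeastI[of "\<lambda>x. u \<le> Gpois mu x", OF k] by (simp add: Gpois_inv_def)
    ultimately show "u \<le> Gpois mu n"
      using Gpois_mono order_trans by blast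
  qed (use False in \<open>simp add: Gpois_inv_def Least_le\<close>)
qed

(* For u > 1 the quantile is a junk value (LEAST over an empty set), but it is constant on
   {1<..}, which is all that measurability needs. *)
lemma Gpois_inv_gt_1:
  assumes "1 < u"
  shows "Gpois_inv mu u = Gpois_inv mu 2"
proof -
  have "\<not> u \<le> Gpois mu x" "\<not> 2 \<le> Gpois mu x" for x
    using Gpois_le_1[of mu x] assms by linarith+
  then show ?thesis
    by (simp add: Gpois_inv_def)
qed

lemma sets_Gpois_inv_le: "{u. Gpois_inv mu u \<le> n} \<in> sets borel"
proof -
  let ?S = "{..<1} \<inter> {..Gpois mu n} \<union> {u. u = 1 \<and> Gpois_inv mu 1 \<le> n}
      \<union> {u. 1 < u \<and> Gpois_inv mu 2 \<le> n}"
  have eq: "{u. Gpois_inv mu u \<le> n} = ?S"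
  proof (rule set_eqI)
    fix u :: real
    consider "u < 1" | "u = 1" | "1 < u"
      by linarith
    then show "u \<in> {u. Gpois_inv mu u \<le> n} \<longleftrightarrow> u \<in> ?S"
    proof cases
      case 1
      then show ?thesis
        using Gpois_inv_le_iff[OF 1] by auto
    next
      case 3
      then show ?thesis
        using Gpois_inv_gt_1[OF 3] by auto
    qed auto
  qed
  show ?thesis
    unfolding eq by (cases "Gpois_inv mu 1 \<le> n"; cases "Gpois_inv mu 2 \<le> n") simp_all
qed

lemma measurable_Gpois_inv [measurable]: "Gpois_inv mu \<in> borel \<rightarrow>\<^sub>M count_space UNIV"
proof (subst measurable_count_space_eq2_countable, safe)
  fix n
  show "Gpois_inv mu -` {n} \<inter> space borel \<in> sets borel"
  proof (cases n)
    case 0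
    then have "Gpois_inv mu -` {n} \<inter> space borel = {u. Gpois_inv mu u \<le> 0}"
      by auto
    then show ?thesis
      by (simp only: sets_Gpois_inv_le)
  next
    case (Suc k)
    then have "Gpois_inv mu -` {n} \<inter> space borel = {u. Gpois_inv mu u \<le> n} - {u. Gpois_inv mu u \<le> k}"
      by auto
    then show ?thesis
      by (simp only: sets_Gpois_inv_le sets.Diff)
  qed
qed simp

lemma sets_pair_measure_pmf_borel:
  fixes p :: "'a::countable pmf"
  assumes "sets N = sets borel" and "\<And>d. Pair d -` S \<in> sets borel"
  shows "S \<in> sets (measure_pmf p \<Otimes>\<^sub>M N)"
proof -
  have "(\<lambda>x. x \<in> S) \<in> count_space UNIV \<Otimes>\<^sub>M borel \<rightarrow>\<^sub>M count_space UNIV"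
  proof (rule measurable_pair_measure_countable1)
    fix d :: 'a
    have "(\<lambda>u. u \<in> Pair d -` S) \<in> borel \<rightarrow>\<^sub>M count_space UNIV"
      using assms(2)[of d] by measurable
    then show "(\<lambda>u. (d, u) \<in> S) \<in> borel \<rightarrow>\<^sub>M count_space UNIV"
      by simp
  qed simp
  then have "{x \<in> space (count_space UNIV \<Otimes>\<^sub>M borel). x \<in> S} \<in> sets (count_space UNIV \<Otimes>\<^sub>M borel)"
    by (rule predE)
  moreover have "sets (measure_pmf p \<Otimes>\<^sub>M N) = sets (count_space UNIV \<Otimes>\<^sub>M borel)"
    using assms(1) by (intro sets_pair_measure_cong) auto
  ultimately show ?thesis
    by (simp add: space_pair_measure)
qed

lemma emeasure_pair_measure_pmf:
  fixes p :: "'a::countable pmf"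
  assumes "prob_space U" "sets U = sets borel" and "\<And>d. Pair d -` S \<in> sets borel"
  shows "emeasure (measure_pmf p \<Otimes>\<^sub>M U) S = (\<integral>\<^sup>+ d. ennreal (measure U (Pair d -` S)) \<partial>p)"
proof -
  interpret U: prob_space U
    by fact
  show ?thesis
    using assms(2,3)
    by (simp add: U.emeasure_pair_measure_alt sets_pair_measure_pmf_borel U.emeasure_eq_measure)
qed

lemma nn_integral_pair_bernoulli_pmf:
  assumes "0 \<le> q" "q \<le> 1" "0 \<le> c" and "\<And>y. 0 \<le> h y" "\<And>y. h y \<le> 1"
  shows "(\<integral>\<^sup>+ d. ennreal (if fst d then h (snd d) else c) \<partial>pair_pmf (bernoulli_pmf q) P)
    = ennreal (q * (\<integral>y. h y \<partial>P) + (1 - q) * c)"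
proof -
  have "integrable P h"
    using assms(4,5) by (intro measure_pmf.integrable_const_bound[where B = 1]) auto
  then have "(\<integral>\<^sup>+ d. ennreal (if fst d then h (snd d) else c) \<partial>pair_pmf (bernoulli_pmf q) P)
      = ennreal (\<integral>y. h y \<partial>P) * q + ennreal c * (1 - q)"
    using assms by (simp add: nn_integral_pair_pmf' nn_integral_eq_integral
        measure_pmf.emeasure_space_1 cong: if_cong)
  also have "\<dots> = ennreal (q * (\<integral>y. h y \<partial>P) + (1 - q) * c)"
    using assms by (simp add: integral_nonneg_AE ennreal_mult'[symmetric] ennreal_plus[symmetric]
        mult.commute del: ennreal_plus)
  finally show ?thesis .
qed

lemma sets_bzip_plus_X_section: "Pair d -` {\<omega>. R (bzip_plus_X L theta \<omega>)} \<in> sets borel"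
proof -
  obtain w y1 y2 where d: "d = (w, y1, y2)"
    by (cases d) auto
  have "(\<lambda>u. R (if w then (y1 + Gpois_inv (theta * fst L) u, y2 + Gpois_inv (theta * snd L) u)
      else (0, 0))) \<in> borel \<rightarrow>\<^sub>M count_space UNIV"
    by measurable
  then show ?thesis
    using predE by (simp add: d bzip_plus_X_def vimage_def)
qed

lemma prob_bzip_plus_event:
  assumes "0 \<le> phi" "phi \<le> 1"
  shows "measure (bzip_space L theta phi)
      {\<omega> \<in> space (bzip_space L theta phi). R (bzip_plus_X L theta \<omega>)}
    = phi * of_bool (R (0, 0)) + (1 - phi) *
      (\<integral>y. measure lborel ({0<..<1} \<inter>
          {u. R (fst y + Gpois_inv (theta * fst L) u, snd y + Gpois_inv (theta * snd L) u)})
        \<partial>pair_pmf (pois ((1 - theta) * fst L)) (pois ((1 - theta) * snd L)))"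
proof -
  define U where "U = uniform_measure lborel {0<..<1::real}"
  define P where "P = pair_pmf (pois ((1 - theta) * fst L)) (pois ((1 - theta) * snd L))"
  define S where "S = {\<omega>. R (bzip_plus_X L theta \<omega>)}"
  define h where "h y = measure lborel ({0<..<1} \<inter>
      {u. R (fst y + Gpois_inv (theta * fst L) u, snd y + Gpois_inv (theta * snd L) u)})" for y
  define c :: real where "c = of_bool (R (0, 0))"
  have c_nonneg: "0 \<le> c"
    by (simp add: c_def)
  interpret U: prob_space U
    unfolding U_def by (intro prob_space_uniform_measure) auto
  have sections: "Pair d -` S \<in> sets borel" for d
    unfolding S_def by (rule sets_bzip_plus_X_section)
  have section_prob: "measure U (Pair d -` S) = (if fst d then h (snd d) else c)" for d
  proof -
    obtain w y where d: "d = (w, y)"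
      by (cases d) auto
    have "measure U (Pair d -` S) = measure lborel ({0<..<1} \<inter> Pair d -` S)"
      unfolding U_def using sections by simp
    moreover have "Pair d -` S = (if w then {u. R (fst y + Gpois_inv (theta * fst L) u,
        snd y + Gpois_inv (theta * snd L) u)} else {u. R (0, 0)})"
      by (cases y) (auto simp: d S_def bzip_plus_X_def)
    ultimately show ?thesis
      by (cases w) (simp_all add: d h_def c_def)
  qed
  have h_bounds: "0 \<le> h y" "h y \<le> 1" for y
    using section_prob[of "(True, y)"] U.prob_le_1[of "Pair (True, y) -` S"] by (simp_all add: h_def)
  have "emeasure (bzip_space L theta phi) S
      = (\<integral>\<^sup>+ d. ennreal (measure U (Pair d -` S)) \<partial>pair_pmf (bernoulli_pmf (1 - phi)) P)"
    unfolding bzip_space_def U_def[symmetric] P_def[symmetric]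
    by (rule emeasure_pair_measure_pmf[OF U.prob_space_axioms]) (simp_all add: sections U_def)
  also have "\<dots> = ennreal ((1 - phi) * (\<integral>y. h y \<partial>P) + phi * c)"
    using assms h_bounds by (simp add: section_prob nn_integral_pair_bernoulli_pmf c_nonneg)
  finally have "emeasure (bzip_space L theta phi) S = ennreal ((1 - phi) * (\<integral>y. h y \<partial>P) + phi * c)" .
  moreover have "0 \<le> (1 - phi) * (\<integral>y. h y \<partial>P) + phi * c"
    using assms h_bounds c_nonneg by (simp add: integral_nonneg_AE)
  ultimately have "measure (bzip_space L theta phi) S = (1 - phi) * (\<integral>y. h y \<partial>P) + phi * c"
    by (simp add: measure_def del: ennreal_plus)
  then show ?thesis
    by (simp add: bzip_space_def space_pair_measure S_def h_def c_def P_def algebra_simps)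
qed

lemma measure_Ioo_inter_atMost:
  assumes "0 \<le> c" "c \<le> 1"
  shows "measure lborel ({0<..<1} \<inter> {u::real. u \<le> c}) = c"
proof (cases "c = 1")
  case True
  then show ?thesis
    by (simp add: Int_absorb2 subset_eq)
next
  case False
  then have "{0<..<1} \<inter> {u::real. u \<le> c} = {0<..c}"
    using assms by auto
  then show ?thesis
    using assms by simp
qed

lemma shifted_Gpois_inv_le_iff:
  assumes "0 \<le> x" "u < 1"
  shows "real (y + Gpois_inv mu u) \<le> x \<longleftrightarrow> y \<le> nat \<lfloor>x\<rfloor> \<and> u \<le> Gpois mu (nat \<lfloor>x\<rfloor> - y)"
proof -
  have "real (y + Gpois_inv mu u) \<le> x \<longleftrightarrow> y + Gpois_inv mu u \<le> nat \<lfloor>x\<rfloor>"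
    using assms(1) by (simp add: le_nat_iff le_floor_iff)
  also have "\<dots> \<longleftrightarrow> y \<le> nat \<lfloor>x\<rfloor> \<and> Gpois_inv mu u \<le> nat \<lfloor>x\<rfloor> - y"
    by auto
  also have "\<dots> \<longleftrightarrow> y \<le> nat \<lfloor>x\<rfloor> \<and> u \<le> Gpois mu (nat \<lfloor>x\<rfloor> - y)"
    using Gpois_inv_le_iff[OF assms(2)] by blast
  finally show ?thesis .
qed

lemma measure_Gpois_inv_section:
  assumes "0 \<le> x"
  shows "measure lborel ({0<..<1} \<inter> {u. real (y + Gpois_inv mu u) \<le> x})
    = (if y \<le> nat \<lfloor>x\<rfloor> then Gpois mu (nat \<lfloor>x\<rfloor> - y) else 0)"
proof -
  have "{0<..<1} \<inter> {u. real (y + Gpois_inv mu u) \<le> x}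
      = (if y \<le> nat \<lfloor>x\<rfloor> then {0<..<1} \<inter> {u. u \<le> Gpois mu (nat \<lfloor>x\<rfloor> - y)} else {})"
    using shifted_Gpois_inv_le_iff[OF assms] by auto
  then show ?thesis
    by (simp add: measure_Ioo_inter_atMost Gpois_nonneg Gpois_le_1)
qed

lemma measure_Gpois_inv_pair_section:
  assumes "0 \<le> x1" "0 \<le> x2"
  shows "measure lborel ({0<..<1} \<inter>
      {u. real (y1 + Gpois_inv mu1 u) \<le> x1 \<and> real (y2 + Gpois_inv mu2 u) \<le> x2})
    = (if y1 \<le> nat \<lfloor>x1\<rfloor> \<and> y2 \<le> nat \<lfloor>x2\<rfloor>
       then min (Gpois mu1 (nat \<lfloor>x1\<rfloor> - y1)) (Gpois mu2 (nat \<lfloor>x2\<rfloor> - y2)) else 0)"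
    (is "_ = (if ?C then ?m else 0)")
proof -
  have set: "{0<..<1} \<inter> {u. real (y1 + Gpois_inv mu1 u) \<le> x1 \<and> real (y2 + Gpois_inv mu2 u) \<le> x2}
      = (if ?C then {0<..<1} \<inter> {u. u \<le> ?m} else {})"
    using shifted_Gpois_inv_le_iff[OF assms(1)] shifted_Gpois_inv_le_iff[OF assms(2)] by auto
  have "measure lborel ({0<..<1} \<inter> {u. u \<le> ?m}) = ?m"
    by (rule measure_Ioo_inter_atMost) (simp_all add: Gpois_nonneg Gpois_le_1 min_le_iff_disj)
  then show ?thesis
    unfolding set by (cases ?C) (simp_all only: if_True if_False if_P if_not_P measure_empty)
qed

lemma integral_pmf_conv:
  "(\<integral>y. (if y \<le> a then g (a - y) else 0) \<partial>measure_pmf p) = pmf_conv p g a"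
  by (subst integral_measure_pmf_real[of "{..a}"]) (auto simp: pmf_conv_def mult.commute split: if_splits)

lemma integral_pair_pmf_conv:
  "(\<integral>y. (if fst y \<le> a \<and> snd y \<le> b then g (a - fst y) (b - snd y) else 0) \<partial>pair_pmf p q)
    = pmf_conv p (\<lambda>A. pmf_conv q (g A) b) a"
proof -
  have "(\<integral>y. (if fst y \<le> a \<and> snd y \<le> b then g (a - fst y) (b - snd y) else 0) \<partial>pair_pmf p q)
      = (\<Sum>y\<in>{..a} \<times> {..b}. (if fst y \<le> a \<and> snd y \<le> b then g (a - fst y) (b - snd y) else 0)
          * pmf (pair_pmf p q) y)"
    by (rule integral_measure_pmf_real) (auto split: if_splits)
  also have "\<dots> = (\<Sum>(y1, y2)\<in>{..a} \<times> {..b}. pmf p y1 * (pmf q y2 * g (a - y1) (b - y2)))"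
    by (intro sum.cong) (auto simp: pmf_pair)
  also have "\<dots> = (\<Sum>y1\<le>a. \<Sum>y2\<le>b. pmf p y1 * (pmf q y2 * g (a - y1) (b - y2)))"
    by (rule sum.cartesian_product[symmetric])
  also have "\<dots> = pmf_conv p (\<lambda>A. pmf_conv q (g A) b) a"
    by (simp add: pmf_conv_def sum_distrib_left)
  finally show ?thesis .
qed

lemma H_plus_eq:
  assumes "0 \<le> phi" "phi \<le> 1"
  shows "H_plus L phi theta x1 x2 = (if 0 \<le> x1 \<and> 0 \<le> x2 then phi + (1 - phi) *
      bp_plus_cdf ((1 - theta) * fst L) ((1 - theta) * snd L) (theta * fst L) (theta * snd L)
        (nat \<lfloor>x1\<rfloor>) (nat \<lfloor>x2\<rfloor>) else 0)"
proof (cases "0 \<le> x1 \<and> 0 \<le> x2")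
  case True
  let ?a = "nat \<lfloor>x1\<rfloor>" and ?b = "nat \<lfloor>x2\<rfloor>"
  let ?g = "\<lambda>A B. min (Gpois (theta * fst L) A) (Gpois (theta * snd L) B)"
  have sections: "measure lborel ({0<..<1} \<inter> {u. real (fst y + Gpois_inv (theta * fst L) u) \<le> x1
      \<and> real (snd y + Gpois_inv (theta * snd L) u) \<le> x2})
    = (if fst y \<le> ?a \<and> snd y \<le> ?b then ?g (?a - fst y) (?b - snd y) else 0)" for y
    using True by (simp only: measure_Gpois_inv_pair_section)
  show ?thesis
    unfolding H_plus_def
      prob_bzip_plus_event[OF assms, where R = "\<lambda>z. real (fst z) \<le> x1 \<and> real (snd z) \<le> x2"]
      fst_conv snd_conv sections integral_pair_pmf_conv[where a = ?a and b = ?b and g = ?g]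
    using True by (simp add: bp_plus_cdf_def)
next
  case False
  then have "{\<omega> \<in> space (bzip_space L theta phi).
      real (fst (bzip_plus_X L theta \<omega>)) \<le> x1 \<and> real (snd (bzip_plus_X L theta \<omega>)) \<le> x2} = {}"
    by (auto simp: not_le)
  then show ?thesis
    unfolding H_plus_def if_not_P[OF False] by (simp only: measure_empty)
qed

lemma F1_plus_eq:
  assumes "0 \<le> phi" "phi \<le> 1" "0 \<le> theta" "theta \<le> 1" "0 \<le> fst L"
  shows "F1_plus L phi theta x = (if 0 \<le> x then phi + (1 - phi) * Gpois (fst L) (nat \<lfloor>x\<rfloor>) else 0)"
proof (cases "0 \<le> x")
  case True
  let ?a = "nat \<lfloor>x\<rfloor>" and ?g = "Gpois (theta * fst L)"
  have sections: "measure lborel ({0<..<1} \<inter> {u. real (fst y + Gpois_inv (theta * fst L) u) \<le> x})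
    = (if fst y \<le> ?a then ?g (?a - fst y) else 0)" for y
    using True by (simp only: measure_Gpois_inv_section)
  have "F1_plus L phi theta x = phi + (1 - phi) * pmf_conv (pois ((1 - theta) * fst L)) ?g ?a"
    unfolding F1_plus_def prob_bzip_plus_event[OF assms(1,2), where R = "\<lambda>z. real (fst z) \<le> x"]
      fst_conv sections
      expectation_pair_pmf_fst[where f = "\<lambda>y. if y \<le> ?a then ?g (?a - y) else 0"]
      integral_pmf_conv
    using True by simp
  then show ?thesis
    using True assms by (simp add: pmf_conv_pois_Gpois_split)
next
  case False
  then have "{\<omega> \<in> space (bzip_space L theta phi). real (fst (bzip_plus_X L theta \<omega>)) \<le> x} = {}"
    by auto
  then show ?thesis
    unfolding F1_plus_def if_not_P[OF False] by (simp only: measure_empty)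
qed

lemma F2_plus_eq:
  assumes "0 \<le> phi" "phi \<le> 1" "0 \<le> theta" "theta \<le> 1" "0 \<le> snd L"
  shows "F2_plus L phi theta x = (if 0 \<le> x then phi + (1 - phi) * Gpois (snd L) (nat \<lfloor>x\<rfloor>) else 0)"
proof (cases "0 \<le> x")
  case True
  let ?a = "nat \<lfloor>x\<rfloor>" and ?g = "Gpois (theta * snd L)"
  have sections: "measure lborel ({0<..<1} \<inter> {u. real (snd y + Gpois_inv (theta * snd L) u) \<le> x})
    = (if snd y \<le> ?a then ?g (?a - snd y) else 0)" for y
    using True by (simp only: measure_Gpois_inv_section)
  have "F2_plus L phi theta x = phi + (1 - phi) * pmf_conv (pois ((1 - theta) * snd L)) ?g ?a"
    unfolding F2_plus_def prob_bzip_plus_event[OF assms(1,2), where R = "\<lambda>z. real (snd z) \<le> x"]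
      snd_conv sections
      expectation_pair_pmf_snd[where f = "\<lambda>y. if y \<le> ?a then ?g (?a - y) else 0"]
      integral_pmf_conv
    using True by simp
  then show ?thesis
    using True assms by (simp add: pmf_conv_pois_Gpois_split)
next
  case False
  then have "{\<omega> \<in> space (bzip_space L theta phi). real (snd (bzip_plus_X L theta \<omega>)) \<le> x} = {}"
    by auto
  then show ?thesis
    unfolding F2_plus_def if_not_P[OF False] by (simp only: measure_empty)
qed

lemma H_plus_mono_theta:
  assumes "0 \<le> l1" "0 \<le> l2" "0 \<le> phi" "phi \<le> 1" "0 \<le> theta" "theta \<le> theta'" "theta' \<le> 1"
  shows "H_plus (l1, l2) phi theta x1 x2 \<le> H_plus (l1, l2) phi theta' x1 x2"
  using assms bp_plus_cdf_mono_theta[OF assms(1,2,5-7)] by (simp add: H_plus_eq mult_left_mono)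

theorem corollary1:
  fixes l1 l2 phi theta theta' :: real
  assumes "0 < l1" and "0 < l2"
    and "0 \<le> phi" and "phi < 1"
    and "0 \<le> theta" and "theta < theta'" and "theta' \<le> 1"
  shows "bzip_plus_PQD (l1, l2) phi theta theta' \<and>
         (\<forall>x1 x2. H_plus (l1, l2) phi theta x1 x2 \<le> H_plus (l1, l2) phi theta' x1 x2)"
proof -
  have "F1_plus (l1, l2) phi theta x = F1_plus (l1, l2) phi theta' x"
    and "F2_plus (l1, l2) phi theta x = F2_plus (l1, l2) phi theta' x" for x
    using assms by (simp_all add: F1_plus_eq F2_plus_eq)
  moreover have "H_plus (l1, l2) phi theta x1 x2 \<le> H_plus (l1, l2) phi theta' x1 x2" for x1 x2
    using assms by (intro H_plus_mono_theta) simp_all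
  ultimately show ?thesis
    by (simp add: bzip_plus_PQD_def)
qed

end
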